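(* Let $A$ be an algebra whose commutator is commutative and distributive w.r.t. arbitrary joins and such that $[\theta,\nabla_A]_A=\theta$ for all $\theta\in\mathrm{Con}(A)$. Then: (a) if $A$ is strongly Baer, then $A$ is semiprime; (b) if $A$ is Baer and has principal commutators, then $A$ is semiprime.
   Context: Let $A$ be an algebra of a fixed signature. $\mathrm{Con}(A)$ is the complete lattice of congruences of $A$, with bottom $\Delta_A$ and top $\nabla_A=A^2$; $\mathrm{PCon}(A)$ is the set of principal congruences of $A$. $[\cdot,\cdot]_A$ is the term condition commutator: for $\alpha,\beta,\mu\in\mathrm{Con}(A)$, $C(\alpha,\beta;\mu)$ means that for all $n,k$, every $(n+k)$-ary term $t$, all $(a_i,b_i)\in\alpha$ and $(c_j,d_j)\in\beta$: $(t(\bar a,\bar c),t(\bar a,\bar d))\in\mu$ iff $(t(\bar b,\bar c),t(\bar b,\bar d))\in\mu$; $[\alpha,\beta]_A=\bigcap\{\mu: C(\alpha,\beta;\mu)\}$; it satisfies $[\alpha,\beta]_A\subseteq\alpha\cap\beta$. "The commutator of $A$ is commutative and distributive w.r.t. arbitrary joins" means $[\alpha,\beta]_A=[\beta,\alpha]_A$ and $[\bigvee_{i}\alpha_i,\beta]_A=\bigvee_{i}[\alpha_i,\beta]_A$ for all families. Set $[\alpha,\beta]^1_A=[\alpha,\beta]_A$ and $[\alpha,\beta]^{n+1}_A=[[\alpha,\beta]^n_A,[\alpha,\beta]^n_A]_A$. A congruence $\phi\neq\nabla_A$ is prime if $[\alpha,\beta]_A\subseteq\phi$ implies $\alpha\subseteq\phi$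 or $\beta\subseteq\phi$; $\rho_A(\theta)$ is the intersection of all prime congruences containing $\theta$ ($\nabla_A$ if none); $A$ is semiprime if $\rho_A(\Delta_A)=\Delta_A$. For $\beta\in\mathrm{Con}(A)$, $\beta^\perp=\bigvee\{\alpha\in\mathrm{Con}(A):[\alpha,\beta]_A=\Delta_A\}$. $\mathcal B(\mathrm{Con}(A))$ is the set of complemented elements of the lattice $\mathrm{Con}(A)$. $A$ is strongly Baer iff $\theta^\perp\in\mathcal B(\mathrm{Con}(A))$ for all $\theta\in\mathrm{Con}(A)$, and Baer iff $\theta^\perp\in\mathcal B(\mathrm{Con}(A))$ for all $\theta\in\mathrm{PCon}(A)$. $A$ has principal commutators iff $[\alpha,\beta]_A\in\mathrm{PCon}(A)$ for all $\alpha,\beta\in\mathrm{PCon}(A)$. *)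

theory Defs
  imports Main
begin

text \<open>An algebra of a fixed signature is given by
  a type of operation symbols 'f, an arity function ar, and an interpretation
  op of each symbol as an operation on the carrier, which is the whole type 'a.
  op f is only meaningful on argument lists of length ar f.\<close>

datatype 'f trm = Var nat | App 'f "'f trm list"

fun eval :: "('f \<Rightarrow> 'a list \<Rightarrow> 'a) \<Rightarrow> (nat \<Rightarrow> 'a) \<Rightarrow> 'f trm \<Rightarrow> 'a" where
  "eval op v (Var i) = v i"
| "eval op v (App f ts) = op f (map (eval op v) ts)"

fun wf_trm :: "('f \<Rightarrow> nat) \<Rightarrow> 'f trm \<Rightarrow> bool" where
  "wf_trm ar (Var i) = True"
| "wf_trm ar (App f ts) = (length ts = ar f \<and> (\<forall>t\<in>set ts. wf_trm ar t))"

fun vars :: "'f trm \<Rightarrow> nat set" where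
  "vars (Var i) = {i}"
| "vars (App f ts) = (\<Union>t\<in>set ts. vars t)"

definition is_congruence :: "('f \<Rightarrow> nat) \<Rightarrow> ('f \<Rightarrow> 'a list \<Rightarrow> 'a) \<Rightarrow> 'a rel \<Rightarrow> bool" where
  "is_congruence ar op \<theta> \<longleftrightarrow> equiv UNIV \<theta> \<and>
     (\<forall>f xs ys. length xs = ar f \<and> length ys = ar f \<and> list_all2 (\<lambda>x y. (x, y) \<in> \<theta>) xs ys
        \<longrightarrow> (op f xs, op f ys) \<in> \<theta>)"

definition Con :: "('f \<Rightarrow> nat) \<Rightarrow> ('f \<Rightarrow> 'a list \<Rightarrow> 'a) \<Rightarrow> 'a rel set" where
  "Con ar op = {\<theta>. is_congruence ar op \<theta>}"

definition Cg :: "('f \<Rightarrow> nat) \<Rightarrow> ('f \<Rightarrow> 'a list \<Rightarrow> 'a) \<Rightarrow> 'a rel \<Rightarrow> 'a rel" where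
  "Cg ar op X = \<Inter>{\<theta> \<in> Con ar op. X \<subseteq> \<theta>}"

definition CJoin :: "('f \<Rightarrow> nat) \<Rightarrow> ('f \<Rightarrow> 'a list \<Rightarrow> 'a) \<Rightarrow> 'a rel set \<Rightarrow> 'a rel" where
  "CJoin ar op S = Cg ar op (\<Union>S)"

definition PCon :: "('f \<Rightarrow> nat) \<Rightarrow> ('f \<Rightarrow> 'a list \<Rightarrow> 'a) \<Rightarrow> 'a rel set" where
  "PCon ar op = {Cg ar op {(a, b)} | a b. True}"

definition TC :: "('f \<Rightarrow> nat) \<Rightarrow> ('f \<Rightarrow> 'a list \<Rightarrow> 'a) \<Rightarrow> 'a rel \<Rightarrow> 'a rel \<Rightarrow> 'a rel \<Rightarrow> bool" where
  "TC ar op \<alpha> \<beta> \<mu> \<longleftrightarrow>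
    (\<forall>(n::nat) (k::nat) t a b c d.
       wf_trm ar t \<and> vars t \<subseteq> {..<n + k} \<and>
       (\<forall>i<n. (a i, b i) \<in> \<alpha>) \<and> (\<forall>j<k. (c j, d j) \<in> \<beta>) \<longrightarrow>
       (let env = (\<lambda>x y i. if i < n then x i else y (i - n)) in
         ((eval op (env a c) t, eval op (env a d) t) \<in> \<mu> \<longleftrightarrow>
          (eval op (env b c) t, eval op (env b d) t) \<in> \<mu>)))"

definition comm :: "('f \<Rightarrow> nat) \<Rightarrow> ('f \<Rightarrow> 'a list \<Rightarrow> 'a) \<Rightarrow> 'a rel \<Rightarrow> 'a rel \<Rightarrow> 'a rel" where
  "comm ar op \<alpha> \<beta> = \<Inter>{\<mu> \<in> Con ar op. TC ar op \<alpha> \<beta> \<mu>}"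

definition comm_commutative_distributive :: "('f \<Rightarrow> nat) \<Rightarrow> ('f \<Rightarrow> 'a list \<Rightarrow> 'a) \<Rightarrow> bool" where
  "comm_commutative_distributive ar op \<longleftrightarrow>
     (\<forall>\<alpha>\<in>Con ar op. \<forall>\<beta>\<in>Con ar op. comm ar op \<alpha> \<beta> = comm ar op \<beta> \<alpha>) \<and>
     (\<forall>S \<subseteq> Con ar op. \<forall>\<beta>\<in>Con ar op.
        comm ar op (CJoin ar op S) \<beta> = CJoin ar op ((\<lambda>\<alpha>. comm ar op \<alpha> \<beta>) ` S))"

definition prime_con :: "('f \<Rightarrow> nat) \<Rightarrow> ('f \<Rightarrow> 'a list \<Rightarrow> 'a) \<Rightarrow> 'a rel \<Rightarrow> bool" where
  "prime_con ar op \<phi> \<longleftrightarrow> \<phi> \<in> Con ar op \<and> \<phi> \<noteq> UNIV \<and>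
     (\<forall>\<alpha>\<in>Con ar op. \<forall>\<beta>\<in>Con ar op. comm ar op \<alpha> \<beta> \<subseteq> \<phi> \<longrightarrow> \<alpha> \<subseteq> \<phi> \<or> \<beta> \<subseteq> \<phi>)"

definition rho :: "('f \<Rightarrow> nat) \<Rightarrow> ('f \<Rightarrow> 'a list \<Rightarrow> 'a) \<Rightarrow> 'a rel \<Rightarrow> 'a rel" where
  "rho ar op \<theta> = \<Inter>{\<phi>. prime_con ar op \<phi> \<and> \<theta> \<subseteq> \<phi>}"

definition semiprime :: "('f \<Rightarrow> nat) \<Rightarrow> ('f \<Rightarrow> 'a list \<Rightarrow> 'a) \<Rightarrow> bool" where
  "semiprime ar op \<longleftrightarrow> rho ar op Id = Id"

definition perp :: "('f \<Rightarrow> nat) \<Rightarrow> ('f \<Rightarrow> 'a list \<Rightarrow> 'a) \<Rightarrow> 'a rel \<Rightarrow> 'a rel" where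
  "perp ar op \<beta> = CJoin ar op {\<alpha> \<in> Con ar op. comm ar op \<alpha> \<beta> = Id}"

definition BCon :: "('f \<Rightarrow> nat) \<Rightarrow> ('f \<Rightarrow> 'a list \<Rightarrow> 'a) \<Rightarrow> 'a rel set" where
  "BCon ar op = {\<theta> \<in> Con ar op. \<exists>\<gamma>\<in>Con ar op. \<theta> \<inter> \<gamma> = Id \<and> CJoin ar op {\<theta>, \<gamma>} = UNIV}"

definition strongly_Baer :: "('f \<Rightarrow> nat) \<Rightarrow> ('f \<Rightarrow> 'a list \<Rightarrow> 'a) \<Rightarrow> bool" where
  "strongly_Baer ar op \<longleftrightarrow> (\<forall>\<theta>\<in>Con ar op. perp ar op \<theta> \<in> BCon ar op)"

definition Baer :: "('f \<Rightarrow> nat) \<Rightarrow> ('f \<Rightarrow> 'a list \<Rightarrow> 'a) \<Rightarrow> bool" where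
  "Baer ar op \<longleftrightarrow> (\<forall>\<theta>\<in>PCon ar op. perp ar op \<theta> \<in> BCon ar op)"

definition principal_commutators :: "('f \<Rightarrow> nat) \<Rightarrow> ('f \<Rightarrow> 'a list \<Rightarrow> 'a) \<Rightarrow> bool" where
  "principal_commutators ar op \<longleftrightarrow>
     (\<forall>\<alpha>\<in>PCon ar op. \<forall>\<beta>\<in>PCon ar op. comm ar op \<alpha> \<beta> \<in> PCon ar op)"

end

theory Submission
  imports Defs
begin

text \<open>Under the Baer condition no nonzero principal congruence \<theta> is abelian: if
  [\<theta>,\<theta>] = \<Delta>, then \<theta> \<le> perp \<theta> and [perp \<theta>, \<theta>] = \<Delta>; for a complement \<gamma> of perp \<theta>
  also [\<gamma>,\<theta>] \<le> \<gamma> \<inter> perp \<theta> = \<Delta>, so \<theta> = [\<nabla>,\<theta>] = [perp \<theta> \<or> \<gamma>, \<theta>] = \<Delta>.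
  Given a \<noteq> b, this yields off-diagonal pairs p(0) = (a,b), p(1), ... with
  p(n+1) \<in> [Cg p(n), Cg p(n)]. A congruence M maximal among those avoiding every p(n)
  (Zorn; principal congruences are compact) is prime: if \<beta>, \<gamma> \<not>\<le> M, then for large m
  both \<beta> \<or> M and \<gamma> \<or> M contain Cg p(m), so p(m+1) \<in> [\<beta> \<or> M, \<gamma> \<or> M], which lies
  in M as soon as [\<beta>,\<gamma>] \<le> M. Thus (a,b) is separated by a prime congruence.\<close>

lemma Con_refl: "\<theta> \<in> Con ar op \<Longrightarrow> (x, x) \<in> \<theta>"
  unfolding Con_def is_congruence_def equiv_def refl_on_def by blast

lemma Con_sym: "\<theta> \<in> Con ar op \<Longrightarrow> (x, y) \<in> \<theta> \<Longrightarrow> (y, x) \<in> \<theta>"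
  unfolding Con_def is_congruence_def equiv_def sym_def by blast

lemma Con_trans: "\<theta> \<in> Con ar op \<Longrightarrow> (x, y) \<in> \<theta> \<Longrightarrow> (y, z) \<in> \<theta> \<Longrightarrow> (x, z) \<in> \<theta>"
  unfolding Con_def is_congruence_def equiv_def trans_def by blast

lemma Con_compat: "\<theta> \<in> Con ar op \<Longrightarrow> length xs = ar f \<Longrightarrow> length ys = ar f \<Longrightarrow>
   list_all2 (\<lambda>x y. (x, y) \<in> \<theta>) xs ys \<Longrightarrow> (op f xs, op f ys) \<in> \<theta>"
  unfolding Con_def is_congruence_def by blast

lemma ConI:
  assumes "\<And>x. (x, x) \<in> \<theta>" "\<And>x y. (x, y) \<in> \<theta> \<Longrightarrow> (y, x) \<in> \<theta>"
    "\<And>x y z. (x, y) \<in> \<theta> \<Longrightarrow> (y, z) \<in> \<theta> \<Longrightarrow> (x, z) \<in> \<theta>"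
    "\<And>f xs ys. length xs = ar f \<Longrightarrow> length ys = ar f \<Longrightarrow>
       list_all2 (\<lambda>x y. (x, y) \<in> \<theta>) xs ys \<Longrightarrow> (op f xs, op f ys) \<in> \<theta>"
  shows "\<theta> \<in> Con ar op"
proof -
  have "equiv UNIV \<theta>"
    by (rule equivI) (auto simp: refl_on_def sym_def trans_def intro: assms(1,2) elim: assms(3))
  then show ?thesis unfolding Con_def is_congruence_def using assms(4) by blast
qed

lemma Con_Inter:
  assumes "S \<subseteq> Con ar op" shows "\<Inter>S \<in> Con ar op"
proof (rule ConI)
  fix x show "(x, x) \<in> \<Inter>S" using assms by (auto intro: Con_refl)
next
  fix x y assume "(x, y) \<in> \<Inter>S" then show "(y, x) \<in> \<Inter>S"
    using assms by (auto intro: Con_sym)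
next
  fix x y z assume "(x, y) \<in> \<Inter>S" "(y, z) \<in> \<Inter>S" then show "(x, z) \<in> \<Inter>S"
    using assms by (auto intro: Con_trans)
next
  fix f xs ys assume len: "length xs = ar f" "length ys = ar f"
    and rel: "list_all2 (\<lambda>x y. (x, y) \<in> \<Inter>S) xs ys"
  show "(op f xs, op f ys) \<in> \<Inter>S"
  proof
    fix \<theta> assume "\<theta> \<in> S"
    with rel have rel\<theta>: "list_all2 (\<lambda>x y. (x, y) \<in> \<theta>) xs ys"
      by (auto elim: list_all2_mono)
    have "\<theta> \<in> Con ar op" using \<open>\<theta> \<in> S\<close> assms by blast
    then show "(op f xs, op f ys) \<in> \<theta>" using len rel\<theta> by (rule Con_compat)
  qed
qed

lemma Id_Con:
  fixes ar :: "'f \<Rightarrow> nat" and op :: "'f \<Rightarrow> 'a list \<Rightarrow> 'a"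
  shows "Id \<in> Con ar op"
proof (rule ConI)
  fix f :: 'f and xs ys :: "'a list" assume "list_all2 (\<lambda>x y. (x, y) \<in> Id) xs ys"
  then have "xs = ys" by (induct rule: list_all2_induct) auto
  then show "(op f xs, op f ys) \<in> Id" by simp
qed auto

lemma UNIV_Con: "UNIV \<in> Con ar op"
  by (rule ConI) auto

lemma Union_chain_Con:
  assumes C: "C \<subseteq> Con ar op" "C \<noteq> {}" "chain\<^sub>\<subseteq> C"
  shows "\<Union>C \<in> Con ar op"
proof -
  have upper: "\<exists>D\<in>C. A \<subseteq> D \<and> B \<subseteq> D" if "A \<in> C" "B \<in> C" for A B
    using that C(3) unfolding chain_subset_def by metis
  have common: "\<exists>\<theta>\<in>C. list_all2 (\<lambda>x y. (x, y) \<in> \<theta>) xs ys"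
    if "list_all2 (\<lambda>x y. (x, y) \<in> \<Union>C) xs ys" for xs ys
    using that
  proof (induct rule: list_all2_induct)
    case Nil then show ?case using C(2) by auto
  next
    case (Cons x xs y ys)
    then obtain A B where AB: "A \<in> C" "B \<in> C" "(x, y) \<in> A"
      and rel: "list_all2 (\<lambda>x y. (x, y) \<in> B) xs ys"
      by blast
    obtain D where "D \<in> C" "A \<subseteq> D" "B \<subseteq> D" using upper AB(1,2) by blast
    moreover have "list_all2 (\<lambda>x y. (x, y) \<in> D) xs ys"
      using rel by (rule list_all2_mono) (use \<open>B \<subseteq> D\<close> in blast)
    ultimately show ?case using AB(3) by auto
  qed
  show ?thesis
  proof (rule ConI)
    fix x
    obtain A where "A \<in> C" using C(2) by blast
    then show "(x, x) \<in> \<Union>C" using C(1) by (meson Con_refl UnionI subsetD)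
  next
    fix x y assume "(x, y) \<in> \<Union>C"
    then show "(y, x) \<in> \<Union>C" using C(1) by (meson Con_sym UnionE UnionI subsetD)
  next
    fix x y z assume "(x, y) \<in> \<Union>C" "(y, z) \<in> \<Union>C"
    then obtain A B where "A \<in> C" "B \<in> C" "(x, y) \<in> A" "(y, z) \<in> B" by blast
    with upper obtain D where "D \<in> C" "(x, y) \<in> D" "(y, z) \<in> D" by blast
    then show "(x, z) \<in> \<Union>C" using C(1) by (meson Con_trans UnionI subsetD)
  next
    fix f xs ys assume len: "length xs = ar f" "length ys = ar f"
      and "list_all2 (\<lambda>x y. (x, y) \<in> \<Union>C) xs ys"
    then obtain \<theta> where "\<theta> \<in> C" and rel: "list_all2 (\<lambda>x y. (x, y) \<in> \<theta>) xs ys"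
      using common by blast
    moreover have "\<theta> \<in> Con ar op" using \<open>\<theta> \<in> C\<close> C(1) by blast
    then have "(op f xs, op f ys) \<in> \<theta>" using len rel by (rule Con_compat)
    ultimately show "(op f xs, op f ys) \<in> \<Union>C" by blast
  qed
qed

lemma Cg_Con: "Cg ar op X \<in> Con ar op"
  unfolding Cg_def by (rule Con_Inter) blast

lemma Cg_upper: "X \<subseteq> Cg ar op X"
  unfolding Cg_def by blast

lemma Cg_least: "\<theta> \<in> Con ar op \<Longrightarrow> X \<subseteq> \<theta> \<Longrightarrow> Cg ar op X \<subseteq> \<theta>"
  unfolding Cg_def by blast

lemma Cg_eq_self: "\<theta> \<in> Con ar op \<Longrightarrow> Cg ar op \<theta> = \<theta>"
  using Cg_upper Cg_least by blast

lemma Cg_subset_Id_eq: "X \<subseteq> Id \<Longrightarrow> Cg ar op X = Id"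
proof
  show "X \<subseteq> Id \<Longrightarrow> Cg ar op X \<subseteq> Id" by (rule Cg_least[OF Id_Con])
  show "Id \<subseteq> Cg ar op X" using Con_refl[OF Cg_Con] by fast
qed

lemma Cg_pair_subset_iff: "\<theta> \<in> Con ar op \<Longrightarrow> Cg ar op {p} \<subseteq> \<theta> \<longleftrightarrow> p \<in> \<theta>"
  using Cg_least[of \<theta> ar op "{p}"] Cg_upper[of "{p}" ar op] by blast

lemma PCon_Con: "\<theta> \<in> PCon ar op \<Longrightarrow> \<theta> \<in> Con ar op"
  unfolding PCon_def using Cg_Con by blast

lemma Baer_if_strongly_Baer: "strongly_Baer ar op \<Longrightarrow> Baer ar op"
  using PCon_Con unfolding strongly_Baer_def Baer_def by blast

lemma Id_subset_comm: "Id \<subseteq> comm ar op \<alpha> \<beta>"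
  unfolding comm_def using Con_refl by fast

lemma exists_maximal_Con_avoiding:
  assumes "P \<inter> Id = {}"
  shows "\<exists>M\<in>Con ar op. P \<inter> M = {} \<and> (\<forall>\<phi>\<in>Con ar op. M \<subseteq> \<phi> \<and> P \<inter> \<phi> = {} \<longrightarrow> \<phi> = M)"
proof -
  define F where "F = {\<phi> \<in> Con ar op. P \<inter> \<phi> = {}}"
  have "\<exists>U\<in>F. \<forall>X\<in>C. X \<subseteq> U" if "C \<in> chains F" for C
  proof (cases "C = {}")
    case True
    then show ?thesis using assms Id_Con unfolding F_def by blast
  next
    case False
    with that Union_chain_Con[of C] have "\<Union>C \<in> F"
      unfolding F_def chains_def by blast
    then show ?thesis by blast
  qed
  then obtain M where "M \<in> F" "\<forall>X\<in>F. M \<subseteq> X \<longrightarrow> X = M"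
    using Zorn_Lemma2[of F] by blast
  then show ?thesis unfolding F_def by auto
qed

locale distributive_commutator =
  fixes ar :: "'f \<Rightarrow> nat" and op :: "'f \<Rightarrow> 'a list \<Rightarrow> 'a"
  assumes comm_commutative_distributive: "comm_commutative_distributive ar op"
begin

lemma comm_commute: "\<alpha> \<in> Con ar op \<Longrightarrow> \<beta> \<in> Con ar op \<Longrightarrow> comm ar op \<alpha> \<beta> = comm ar op \<beta> \<alpha>"
  using comm_commutative_distributive unfolding comm_commutative_distributive_def by blast

lemma comm_CJoin_left: "S \<subseteq> Con ar op \<Longrightarrow> \<beta> \<in> Con ar op \<Longrightarrow>
    comm ar op (CJoin ar op S) \<beta> = CJoin ar op ((\<lambda>\<alpha>. comm ar op \<alpha> \<beta>) ` S)"
  using comm_commutative_distributive unfolding comm_commutative_distributive_def by blast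

lemma comm_Cg_Un_left:
  assumes "\<alpha> \<in> Con ar op" "\<alpha>' \<in> Con ar op" "\<beta> \<in> Con ar op"
  shows "comm ar op (Cg ar op (\<alpha> \<union> \<alpha>')) \<beta> = Cg ar op (comm ar op \<alpha> \<beta> \<union> comm ar op \<alpha>' \<beta>)"
  using comm_CJoin_left[of "{\<alpha>, \<alpha>'}" \<beta>] assms by (simp add: CJoin_def)

lemma comm_mono_left:
  assumes "\<alpha> \<in> Con ar op" "\<alpha>' \<in> Con ar op" "\<beta> \<in> Con ar op" "\<alpha> \<subseteq> \<alpha>'"
  shows "comm ar op \<alpha> \<beta> \<subseteq> comm ar op \<alpha>' \<beta>"
proof -
  have "Cg ar op (\<alpha> \<union> \<alpha>') = \<alpha>'" using assms(2,4) Cg_eq_self by (simp add: sup_absorb2)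
  then show ?thesis using comm_Cg_Un_left[OF assms(1-3)] Cg_upper by (metis le_supE)
qed

lemma comm_mono_right:
  assumes "\<beta> \<in> Con ar op" "\<beta>' \<in> Con ar op" "\<alpha> \<in> Con ar op" "\<beta> \<subseteq> \<beta>'"
  shows "comm ar op \<alpha> \<beta> \<subseteq> comm ar op \<alpha> \<beta>'"
  using comm_mono_left[OF assms] comm_commute assms by metis

lemma comm_perp_eq_Id:
  assumes "\<theta> \<in> Con ar op"
  shows "comm ar op (perp ar op \<theta>) \<theta> = Id"
proof -
  define S where "S = {\<alpha> \<in> Con ar op. comm ar op \<alpha> \<theta> = Id}"
  have "\<Union>((\<lambda>\<alpha>. comm ar op \<alpha> \<theta>) ` S) \<subseteq> Id" unfolding S_def by auto
  then have "CJoin ar op ((\<lambda>\<alpha>. comm ar op \<alpha> \<theta>) ` S) = Id"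
    unfolding CJoin_def by (rule Cg_subset_Id_eq)
  then show ?thesis
    using comm_CJoin_left[of S \<theta>] assms unfolding perp_def S_def by auto
qed

lemma abelian_subset_perp:
  assumes "\<theta> \<in> Con ar op" "comm ar op \<theta> \<theta> \<subseteq> Id"
  shows "\<theta> \<subseteq> perp ar op \<theta>"
proof -
  have "comm ar op \<theta> \<theta> = Id" using assms(2) Id_subset_comm by blast
  then have "\<theta> \<subseteq> \<Union>{\<alpha> \<in> Con ar op. comm ar op \<alpha> \<theta> = Id}" using assms(1) by blast
  also have "\<dots> \<subseteq> perp ar op \<theta>" unfolding perp_def CJoin_def by (rule Cg_upper)
  finally show ?thesis .
qed

end

locale distributive_commutator_top = distributive_commutator +
  assumes comm_UNIV: "\<theta> \<in> Con ar op \<Longrightarrow> comm ar op \<theta> UNIV = \<theta>"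
begin

lemma comm_subset_left: "\<theta> \<in> Con ar op \<Longrightarrow> \<gamma> \<in> Con ar op \<Longrightarrow> comm ar op \<theta> \<gamma> \<subseteq> \<theta>"
  using comm_mono_right[OF _ UNIV_Con] comm_UNIV by blast

lemma comm_subset_right: "\<theta> \<in> Con ar op \<Longrightarrow> \<gamma> \<in> Con ar op \<Longrightarrow> comm ar op \<theta> \<gamma> \<subseteq> \<gamma>"
  using comm_subset_left comm_commute by metis

lemma abelian_eq_Id_if_perp_complemented:
  assumes \<theta>: "\<theta> \<in> Con ar op" "comm ar op \<theta> \<theta> \<subseteq> Id"
    and compl: "perp ar op \<theta> \<in> BCon ar op"
  shows "\<theta> \<subseteq> Id"
proof -
  let ?P = "perp ar op \<theta>"
  obtain \<gamma> where P: "?P \<in> Con ar op" and \<gamma>: "\<gamma> \<in> Con ar op"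
    and meet: "?P \<inter> \<gamma> = Id" and join: "Cg ar op (?P \<union> \<gamma>) = UNIV"
    using compl unfolding BCon_def CJoin_def by auto
  have "comm ar op \<gamma> \<theta> \<subseteq> ?P \<inter> \<gamma>"
    using comm_subset_left[OF \<gamma> \<theta>(1)] comm_subset_right[OF \<gamma> \<theta>(1)] abelian_subset_perp[OF \<theta>]
    by blast
  then have \<gamma>\<theta>: "comm ar op \<gamma> \<theta> \<subseteq> Id" using meet by blast
  have "\<theta> = comm ar op UNIV \<theta>" using comm_UNIV comm_commute UNIV_Con \<theta>(1) by metis
  also have "\<dots> = Cg ar op (comm ar op ?P \<theta> \<union> comm ar op \<gamma> \<theta>)"
    using comm_Cg_Un_left[OF P \<gamma> \<theta>(1)] join by simp
  also have "\<dots> = Id" using comm_perp_eq_Id[OF \<theta>(1)] \<gamma>\<theta> by (intro Cg_subset_Id_eq) blast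
  finally show ?thesis by simp
qed

lemma comm_Cg_Un_subset:
  assumes "\<beta> \<in> Con ar op" "\<gamma> \<in> Con ar op" "M \<in> Con ar op" "comm ar op \<beta> \<gamma> \<subseteq> M"
  shows "comm ar op (Cg ar op (\<beta> \<union> M)) (Cg ar op (\<gamma> \<union> M)) \<subseteq> M"
proof -
  let ?G = "Cg ar op (\<gamma> \<union> M)"
  have "comm ar op \<beta> ?G = Cg ar op (comm ar op \<gamma> \<beta> \<union> comm ar op M \<beta>)"
    using comm_commute comm_Cg_Un_left Cg_Con assms(1-3) by metis
  also have "\<dots> \<subseteq> M"
    using Cg_least comm_subset_left comm_commute assms by (metis Un_least)
  finally have "comm ar op \<beta> ?G \<subseteq> M" .
  moreover have "comm ar op M ?G \<subseteq> M" using comm_subset_left Cg_Con assms(3) by blast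
  ultimately show ?thesis
    using comm_Cg_Un_left[OF assms(1,3) Cg_Con] Cg_least[OF assms(3)] by simp
qed

lemma prime_if_maximal_avoiding_descent:
  assumes descent: "\<And>n. p (Suc n) \<in> comm ar op (Cg ar op {p n}) (Cg ar op {p n})"
    and M: "M \<in> Con ar op" "range p \<inter> M = {}"
    and maximal: "\<forall>\<phi>\<in>Con ar op. M \<subseteq> \<phi> \<and> range p \<inter> \<phi> = {} \<longrightarrow> \<phi> = M"
  shows "prime_con ar op M"
proof -
  define \<alpha> where "\<alpha> n = Cg ar op {p n}" for n
  have \<alpha>_Con: "\<alpha> n \<in> Con ar op" for n unfolding \<alpha>_def by (rule Cg_Con)
  have "\<alpha> (Suc n) \<subseteq> \<alpha> n" for n
    using descent[of n] comm_subset_left[OF \<alpha>_Con \<alpha>_Con] Cg_pair_subset_iff[OF \<alpha>_Con]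
    unfolding \<alpha>_def by blast
  then have \<alpha>_antimono: "i \<le> m \<Longrightarrow> \<alpha> m \<subseteq> \<alpha> i" for i m
    by (rule lift_Suc_antimono_le)
  have eventually_in_join: "\<exists>i. \<forall>m\<ge>i. \<alpha> m \<subseteq> Cg ar op (\<beta> \<union> M)"
    if "\<beta> \<in> Con ar op" "\<not> \<beta> \<subseteq> M" for \<beta>
  proof -
    have "M \<subseteq> Cg ar op (\<beta> \<union> M)" "Cg ar op (\<beta> \<union> M) \<noteq> M"
      using that(2) Cg_upper[of "\<beta> \<union> M" ar op] by blast+
    then obtain i where "p i \<in> Cg ar op (\<beta> \<union> M)"
      using maximal Cg_Con[of ar op "\<beta> \<union> M"] by blast
    then have "\<alpha> i \<subseteq> Cg ar op (\<beta> \<union> M)"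
      unfolding \<alpha>_def by (simp add: Cg_pair_subset_iff[OF Cg_Con])
    then show ?thesis by (meson \<alpha>_antimono order_trans)
  qed
  have "\<beta> \<subseteq> M \<or> \<gamma> \<subseteq> M"
    if \<beta>\<gamma>: "\<beta> \<in> Con ar op" "\<gamma> \<in> Con ar op" "comm ar op \<beta> \<gamma> \<subseteq> M" for \<beta> \<gamma>
  proof (rule ccontr)
    assume "\<not> (\<beta> \<subseteq> M \<or> \<gamma> \<subseteq> M)"
    then obtain m where m: "\<alpha> m \<subseteq> Cg ar op (\<beta> \<union> M)" "\<alpha> m \<subseteq> Cg ar op (\<gamma> \<union> M)"
      using eventually_in_join \<beta>\<gamma>(1,2) by (metis max.cobounded1 max.cobounded2)
    have "comm ar op (\<alpha> m) (\<alpha> m) \<subseteq> comm ar op (Cg ar op (\<beta> \<union> M)) (\<alpha> m)"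
      using comm_mono_left[OF \<alpha>_Con Cg_Con \<alpha>_Con m(1)] .
    also have "\<dots> \<subseteq> comm ar op (Cg ar op (\<beta> \<union> M)) (Cg ar op (\<gamma> \<union> M))"
      using comm_mono_right[OF \<alpha>_Con Cg_Con Cg_Con m(2)] .
    also have "\<dots> \<subseteq> M" using comm_Cg_Un_subset[OF \<beta>\<gamma>(1,2) M(1) \<beta>\<gamma>(3)] .
    finally show False using descent[of m] M(2) unfolding \<alpha>_def by blast
  qed
  then show ?thesis using M unfolding prime_con_def by blast
qed

lemma exists_prime_separating:
  assumes no_abelian: "\<And>\<theta>. \<theta> \<in> PCon ar op \<Longrightarrow> comm ar op \<theta> \<theta> \<subseteq> Id \<Longrightarrow> \<theta> \<subseteq> Id"
    and "a \<noteq> b"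
  shows "\<exists>M. prime_con ar op M \<and> (a, b) \<notin> M"
proof -
  have next_pair: "\<exists>q. fst q \<noteq> snd q \<and> q \<in> comm ar op (Cg ar op {p}) (Cg ar op {p})"
    if "fst p \<noteq> snd p" for p
  proof -
    have "Cg ar op {p} \<in> PCon ar op" unfolding PCon_def by (cases p) auto
    moreover have "\<not> Cg ar op {p} \<subseteq> Id" using that Cg_upper[of "{p}" ar op] by (cases p) auto
    ultimately show ?thesis using no_abelian by fastforce
  qed
  obtain p where p: "\<And>n. fst (p n) \<noteq> snd (p n) \<and> (n = 0 \<longrightarrow> p n = (a, b))"
    and descent: "\<And>n. p (Suc n) \<in> comm ar op (Cg ar op {p n}) (Cg ar op {p n})"
    using dependent_nat_choice[of "\<lambda>n q. fst q \<noteq> snd q \<and> (n = 0 \<longrightarrow> q = (a, b))"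
        "\<lambda>n q q'. q' \<in> comm ar op (Cg ar op {q}) (Cg ar op {q})"] next_pair \<open>a \<noteq> b\<close>
    by fastforce
  have "p n \<notin> Id" for n using p[of n] by (cases "p n") auto
  then have "range p \<inter> Id = {}" by (metis disjoint_iff rangeE)
  then obtain M where M: "M \<in> Con ar op" "range p \<inter> M = {}"
    and maximal: "\<forall>\<phi>\<in>Con ar op. M \<subseteq> \<phi> \<and> range p \<inter> \<phi> = {} \<longrightarrow> \<phi> = M"
    using exists_maximal_Con_avoiding by blast
  have "prime_con ar op M" using descent M maximal by (rule prime_if_maximal_avoiding_descent)
  moreover have "(a, b) \<notin> M" using M(2) p[of 0] by (metis disjoint_iff rangeI)
  ultimately show ?thesis by (intro exI conjI)
qed

lemma semiprime_if_no_abelian_principal: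
  assumes "\<And>\<theta>. \<theta> \<in> PCon ar op \<Longrightarrow> comm ar op \<theta> \<theta> \<subseteq> Id \<Longrightarrow> \<theta> \<subseteq> Id"
  shows "semiprime ar op"
proof -
  have "(a, b) \<notin> rho ar op Id" if ab: "a \<noteq> b" for a b
  proof -
    obtain M where M: "prime_con ar op M" "(a, b) \<notin> M"
      using exists_prime_separating[OF assms ab] by blast
    have "Id \<subseteq> M" using M(1) Con_refl unfolding prime_con_def by fast
    with M show ?thesis unfolding rho_def by blast
  qed
  then have "rho ar op Id \<subseteq> Id" by auto
  then show ?thesis unfolding semiprime_def rho_def by blast
qed

lemma semiprime_if_Baer:
  assumes Baer: "Baer ar op"
  shows "semiprime ar op"
proof (rule semiprime_if_no_abelian_principal)
  fix \<theta> assume \<theta>: "\<theta> \<in> PCon ar op" "comm ar op \<theta> \<theta> \<subseteq> Id"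
  moreover have "perp ar op \<theta> \<in> BCon ar op" using Baer \<theta>(1) unfolding Baer_def by blast
  ultimately show "\<theta> \<subseteq> Id" by (rule abelian_eq_Id_if_perp_complemented[OF PCon_Con])
qed

end

theorem mainTheorem6:
  fixes ar :: "'f \<Rightarrow> nat" and op :: "'f \<Rightarrow> 'a list \<Rightarrow> 'a"
  assumes "comm_commutative_distributive ar op"
    and "\<forall>\<theta>\<in>Con ar op. comm ar op \<theta> UNIV = \<theta>"
  shows "(strongly_Baer ar op \<longrightarrow> semiprime ar op) \<and>
         (Baer ar op \<and> principal_commutators ar op \<longrightarrow> semiprime ar op)"
proof -
  interpret distributive_commutator_top ar op
    using assms by unfold_locales auto
  show ?thesis using semiprime_if_Baer Baer_if_strongly_Baer by blast
qed

end
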